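(* Let $c=(c_1,c_2)$ be a differentiable map defined for $x\in\mathbb{R}$, $y>0$ (at least near the line $x=1/2$) such that $c(\tfrac12,y)=a(\tfrac12,y)$ for all $y$, $c_1(x,y)+x\,c_2(x,y)=\tfrac12$ for all $(x,y)$, and $\partial_xc_2(\tfrac12,y)=0$ for all $y$. Then for every fixed $\alpha>0$ the functions $(x,y)\mapsto\theta_{(x,y)}(c(x,y);\alpha)$ and $(x,y)\mapsto\widehat\theta_{(x,y)}(c(x,y);\alpha)$ have vanishing gradient at $(x,y)=(1/2,\sqrt3/2)$.
   Context: For $y>0$, $c=(c_1,c_2)\in\mathbb{R}^2$, $\alpha>0$: $\theta_{(x,y)}(c;\alpha)=\sum_{k,l\in\mathbb{Z}}\exp(-\tfrac{\pi\alpha}{y}((k+c_1)^2+2x(k+c_1)(l+c_2)+(x^2+y^2)(l+c_2)^2))$ and $\widehat\theta_{(x,y)}(c;\alpha)=\sum_{k,l\in\mathbb{Z}}\exp(-\tfrac{\pi\alpha}{y}(k^2+2xkl+(x^2+y^2)l^2))e^{2\pi i(kc_2-lc_1)}$. The circumcenter point $a(x,y)=(a_1,a_2)$ is $a_1=\frac{(1-x)(x^2+y^2)}{2y^2}$, $a_2=\frac{x^2+y^2-x}{2y^2}$. *)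

theory Defs
  imports "HOL-Analysis.Analysis"
begin

definition theta :: "real \<times> real \<Rightarrow> real \<times> real \<Rightarrow> real \<Rightarrow> real" where
  "theta z c \<alpha> = (case z of (x, y) \<Rightarrow> case c of (c1, c2) \<Rightarrow>
     (\<Sum>\<^sub>\<infinity>(k, l) \<in> (UNIV :: (int \<times> int) set).
        exp (- (pi * \<alpha> / y) * ((of_int k + c1)\<^sup>2 + 2 * x * (of_int k + c1) * (of_int l + c2)
                                 + (x\<^sup>2 + y\<^sup>2) * (of_int l + c2)\<^sup>2))))"

definition theta_hat :: "real \<times> real \<Rightarrow> real \<times> real \<Rightarrow> real \<Rightarrow> complex" where
  "theta_hat z c \<alpha> = (case z of (x, y) \<Rightarrow> case c of (c1, c2) \<Rightarrow>
     (\<Sum>\<^sub>\<infinity>(k, l) \<in> (UNIV :: (int \<times> int) set).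
        complex_of_real (exp (- (pi * \<alpha> / y) * ((of_int k)\<^sup>2 + 2 * x * of_int k * of_int l
                                 + (x\<^sup>2 + y\<^sup>2) * (of_int l)\<^sup>2)))
        * cis (2 * pi * (of_int k * c2 - of_int l * c1))))"

definition circ_a :: "real \<times> real \<Rightarrow> real \<times> real" where
  "circ_a z = (case z of (x, y) \<Rightarrow>
     ((1 - x) * (x\<^sup>2 + y\<^sup>2) / (2 * y\<^sup>2), (x\<^sup>2 + y\<^sup>2 - x) / (2 * y\<^sup>2)))"

end

theory Submission
  imports Defs
begin

(* Write a point as p = ((x, y), (c1, c2)) with \<tau> = x + i y. Both theta and theta_hat are sums over
   \<int>\<^sup>2 of Gaussian terms in p which, together with their derivatives, are dominated near
   hex_point = ((1/2, sqrt 3 / 2), (1/3, 1/3)) by C (1 + |n|\<^sup>2) exp (- \<beta> |n|\<^sup>2); hence both sums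
   are differentiable there. The maps (\<tau>, c) \<mapsto> (1 - conj \<tau>, (1 - c1 - c2, c2)) and
   (\<tau>, c) \<mapsto> (1 - 1/\<tau>, (1 - c1 - c2, c1)) fix hex_point and leave both sums unchanged up to a
   permutation of \<int>\<^sup>2, so the derivative L of either sum at hex_point satisfies L \<circ> A = L and
   L \<circ> B = L for the derivatives A, B of these maps there, which forces L = 0. Since
   c (1/2, sqrt 3 / 2) = (1/3, 1/3), the chain rule along z \<mapsto> (z, c z) gives the theorem. *)

(* qform (x, y) (u, v) = |u + v \<tau>|\<^sup>2 for \<tau> = x + i y. *)
definition qform :: "real \<times> real \<Rightarrow> real \<times> real \<Rightarrow> real" where
  "qform z w = (fst w)\<^sup>2 + 2 * fst z * fst w * snd w + ((fst z)\<^sup>2 + (snd z)\<^sup>2) * (snd w)\<^sup>2"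

definition gauss_term :: "real \<Rightarrow> (real \<times> real) \<times> (real \<times> real) \<Rightarrow> real" where
  "gauss_term \<alpha> p = exp (- (pi * \<alpha> / snd (fst p)) * qform (fst p) (snd p))"

(* dq is the derivative of qform (fst p) (snd p) in direction h, grouped as in qform_eq_sum_squares. *)
definition gauss_term_deriv ::
    "real \<Rightarrow> (real \<times> real) \<times> (real \<times> real) \<Rightarrow> (real \<times> real) \<times> (real \<times> real) \<Rightarrow> real" where
  "gauss_term_deriv \<alpha> p h =
     (let x = fst (fst p); y = snd (fst p); u = fst (snd p); v = snd (snd p);
          a = fst (fst h); b = snd (fst h); du = fst (snd h); dv = snd (snd h);
          dq = 2 * (u + x * v) * (du + v * a + x * dv) + 2 * y * v * (v * b + y * dv)
      in - gauss_term \<alpha> p * pi * \<alpha> * (dq / y - qform (fst p) (snd p) * b / y\<^sup>2))"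

lemma qform_eq_sum_squares: "qform z w = (fst w + fst z * snd w)\<^sup>2 + (snd z * snd w)\<^sup>2"
  by (simp add: qform_def power2_eq_square algebra_simps)

lemma qform_uminus: "qform z (- w) = qform z w"
  by (simp add: qform_def)

lemma qform_reflect: "qform (1 - x, y) (u, v) = qform (x, y) (u + v, - v)"
  by (simp add: qform_def power2_eq_square algebra_simps)

lemma qform_rotate:
  assumes "y \<noteq> 0"
  shows "qform (1 - x / (x\<^sup>2 + y\<^sup>2), y / (x\<^sup>2 + y\<^sup>2)) (u, v) = qform (x, y) (v, - (u + v)) / (x\<^sup>2 + y\<^sup>2)"
proof -
  define r where "r = x\<^sup>2 + y\<^sup>2"
  have r: "r \<noteq> 0" using assms by (simp add: r_def add_nonneg_eq_0_iff)
  have "(1 - x / r)\<^sup>2 + (y / r)\<^sup>2 = 1 - 2 * x / r + (x\<^sup>2 + y\<^sup>2) / r\<^sup>2"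
    using r by (simp add: power2_eq_square field_simps)
  also have "\<dots> = 1 - 2 * x / r + 1 / r"
    using r unfolding r_def[symmetric] by (simp add: power2_eq_square)
  finally have "qform (1 - x / r, y / r) (u, v) = u\<^sup>2 + 2 * (1 - x / r) * u * v + (1 - 2 * x / r + 1 / r) * v\<^sup>2"
    by (simp add: qform_def)
  also have "\<dots> = (v\<^sup>2 + 2 * x * v * (- (u + v)) + r * (- (u + v))\<^sup>2) / r"
    using r by (simp add: field_simps power2_eq_square)
  finally show ?thesis
    by (simp add: qform_def r_def)
qed

lemma gauss_term_has_derivative:
  assumes "snd (fst p) \<noteq> 0"
  shows "(gauss_term \<alpha> has_derivative gauss_term_deriv \<alpha> p) (at p)"
  unfolding gauss_term_def[abs_def] qform_def
  by (rule has_derivative_eq_rhs, (rule derivative_eq_intros refl assms)+)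
     (use assms in \<open>simp add: gauss_term_deriv_def gauss_term_def qform_def Let_def fun_eq_iff
                                  field_simps power2_eq_square\<close>)

section \<open>Estimates on the strip\<close>

lemma abs_components_le_norm:
  fixes a b c d :: real
  shows "\<bar>a\<bar> \<le> norm ((a, b), (c, d))" "\<bar>b\<bar> \<le> norm ((a, b), (c, d))"
    "\<bar>c\<bar> \<le> norm ((a, b), (c, d))" "\<bar>d\<bar> \<le> norm ((a, b), (c, d))"
  using order_trans[OF norm_fst_le[of a b] norm_fst_le[of "(a, b)" "(c, d)"]]
    order_trans[OF norm_snd_le[of b a] norm_fst_le[of "(a, b)" "(c, d)"]]
    order_trans[OF norm_fst_le[of c d] norm_snd_le[of "(c, d)" "(a, b)"]]
    order_trans[OF norm_snd_le[of d c] norm_snd_le[of "(c, d)" "(a, b)"]]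
  by simp_all

lemma qform_lower_bound:
  assumes "0 \<le> x" "x \<le> 1" "1/2 \<le> y"
  shows "u\<^sup>2 + v\<^sup>2 \<le> 16 * qform (x, y) (u, v)"
proof -
  have "x\<^sup>2 \<le> 1" using assms by (simp add: power_le_one)
  then have "(x * v)\<^sup>2 \<le> v\<^sup>2"
    by (simp add: power_mult_distrib mult_left_le_one_le)
  moreover have "1/4 \<le> y\<^sup>2" using assms power_mono[of "1/2" y 2] by (simp add: power2_eq_square)
  then have "v\<^sup>2 \<le> 4 * (y * v)\<^sup>2"
    using mult_right_mono[of "1/4" "y\<^sup>2" "v\<^sup>2"] by (simp add: power_mult_distrib)
  moreover have "u\<^sup>2 \<le> 2 * (u + x * v)\<^sup>2 + 2 * (x * v)\<^sup>2"
    using zero_le_power2[of "u + 2 * x * v"] by (simp add: power2_eq_square algebra_simps)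
  ultimately show ?thesis
    using zero_le_power2[of v] zero_le_power2[of "u + x * v"]
    unfolding qform_eq_sum_squares fst_conv snd_conv distrib_left by linarith
qed

lemma qform_upper_bound:
  assumes "0 \<le> x" "x \<le> 1" "0 \<le> y" "y \<le> 1"
  shows "qform (x, y) (u, v) \<le> 3 * (u\<^sup>2 + v\<^sup>2)"
proof -
  have "\<bar>x * v\<bar> \<le> \<bar>v\<bar>" using assms by (simp add: abs_mult mult_left_le_one_le)
  then have "\<bar>u + x * v\<bar> \<le> \<bar>u\<bar> + \<bar>v\<bar>" using abs_triangle_ineq[of u "x * v"] by linarith
  then have "(u + x * v)\<^sup>2 \<le> (\<bar>u\<bar> + \<bar>v\<bar>)\<^sup>2"
    by (metis abs_ge_zero power2_abs power_mono)
  moreover have "(y * v)\<^sup>2 \<le> v\<^sup>2"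
    using assms by (simp add: power_mult_distrib mult_left_le_one_le power_le_one)
  moreover have "(\<bar>u\<bar> + \<bar>v\<bar>)\<^sup>2 \<le> 2 * (u\<^sup>2 + v\<^sup>2)"
    using zero_le_power2[of "\<bar>u\<bar> - \<bar>v\<bar>"] by (simp add: power2_eq_square algebra_simps)
  ultimately show ?thesis
    using zero_le_power2[of u] unfolding qform_eq_sum_squares fst_conv snd_conv by (smt (verit))
qed

lemma two_abs_le_one_plus_square: "2 * \<bar>u\<bar> \<le> 1 + (u::real)\<^sup>2"
  using zero_le_power2[of "\<bar>u\<bar> - 1"] by (simp add: power2_eq_square algebra_simps)

lemma qform_deriv_bound:
  fixes x y u v a b du dv H :: real
  assumes "0 \<le> x" "x \<le> 1" "0 \<le> y" "y \<le> 1"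
    and "\<bar>a\<bar> \<le> H" "\<bar>b\<bar> \<le> H" "\<bar>du\<bar> \<le> H" "\<bar>dv\<bar> \<le> H"
  shows "\<bar>2 * (u + x * v) * (du + v * a + x * dv) + 2 * y * v * (v * b + y * dv)\<bar> \<le> 8 * (1 + u\<^sup>2 + v\<^sup>2) * H"
proof -
  have H: "0 \<le> H" using assms(5) by linarith
  have xv: "\<bar>x * v\<bar> \<le> \<bar>v\<bar>" and yv: "\<bar>y * v\<bar> \<le> \<bar>v\<bar>"
    using assms by (simp_all add: abs_mult mult_left_le_one_le)
  have "\<bar>x * dv\<bar> \<le> H" "\<bar>y * dv\<bar> \<le> H"
    using assms by (simp_all add: abs_mult mult_le_one order_trans[OF mult_left_le_one_le])
  moreover have "\<bar>v * a\<bar> \<le> \<bar>v\<bar> * H" "\<bar>v * b\<bar> \<le> \<bar>v\<bar> * H"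
    using assms by (simp_all add: abs_mult mult_left_mono)
  ultimately have du_term: "\<bar>du + v * a + x * dv\<bar> \<le> (2 + \<bar>v\<bar>) * H"
    and dv_term: "\<bar>v * b + y * dv\<bar> \<le> (\<bar>v\<bar> + 1) * H"
    using assms(7) abs_triangle_ineq[of "du + v * a" "x * dv"] abs_triangle_ineq[of du "v * a"]
      abs_triangle_ineq[of "v * b" "y * dv"]
    unfolding distrib_right by linarith+
  have uv_term: "\<bar>u + x * v\<bar> \<le> \<bar>u\<bar> + \<bar>v\<bar>" using xv abs_triangle_ineq[of u "x * v"] by linarith
  have "\<bar>2 * (u + x * v) * (du + v * a + x * dv) + 2 * y * v * (v * b + y * dv)\<bar>
      \<le> 2 * (\<bar>u + x * v\<bar> * \<bar>du + v * a + x * dv\<bar>) + 2 * (\<bar>y * v\<bar> * \<bar>v * b + y * dv\<bar>)"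
    by (rule order_trans[OF abs_triangle_ineq]) (simp only: abs_mult abs_numeral mult.assoc order_refl)
  also have "\<dots> \<le> 2 * ((\<bar>u\<bar> + \<bar>v\<bar>) * ((2 + \<bar>v\<bar>) * H)) + 2 * (\<bar>v\<bar> * ((\<bar>v\<bar> + 1) * H))"
    by (intro add_mono mult_left_mono mult_mono du_term dv_term uv_term yv) auto
  also have "\<dots> = 2 * (2 * \<bar>u\<bar> + 3 * \<bar>v\<bar> + \<bar>u\<bar> * \<bar>v\<bar> + 2 * v\<^sup>2) * H"
    by (simp add: power2_eq_square algebra_simps)
  also have "\<dots> \<le> 8 * (1 + u\<^sup>2 + v\<^sup>2) * H"
  proof -
    have "2 * (\<bar>u\<bar> * \<bar>v\<bar>) \<le> u\<^sup>2 + v\<^sup>2"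
      using zero_le_power2[of "\<bar>u\<bar> - \<bar>v\<bar>"] by (simp add: power2_eq_square algebra_simps)
    then have "2 * \<bar>u\<bar> + 3 * \<bar>v\<bar> + \<bar>u\<bar> * \<bar>v\<bar> + 2 * v\<^sup>2 \<le> 4 * (1 + u\<^sup>2 + v\<^sup>2)"
      using two_abs_le_one_plus_square[of u] two_abs_le_one_plus_square[of v] zero_le_power2[of u]
      unfolding distrib_left by linarith
    then show ?thesis using H by (simp add: mult_right_mono)
  qed
  finally show ?thesis .
qed

lemma gauss_term_pos: "0 < gauss_term \<alpha> p"
  by (simp add: gauss_term_def)

lemma gauss_term_le:
  assumes "0 \<le> x" "x \<le> 1" "1/2 \<le> y" "y \<le> 1" "0 \<le> \<alpha>"
  shows "gauss_term \<alpha> ((x, y), (u, v)) \<le> exp (- (pi * \<alpha> / 16) * (u\<^sup>2 + v\<^sup>2))"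
proof -
  have "pi * \<alpha> / 16 * (u\<^sup>2 + v\<^sup>2) \<le> pi * \<alpha> / 16 * (16 * qform (x, y) (u, v))"
    using assms by (intro mult_left_mono qform_lower_bound) auto
  also have "\<dots> = pi * \<alpha> * qform (x, y) (u, v)" by simp
  also have "\<dots> \<le> pi * \<alpha> / y * qform (x, y) (u, v)"
  proof (rule mult_right_mono)
    show "pi * \<alpha> \<le> pi * \<alpha> / y"
      using assms by (simp add: le_divide_eq mult_left_le)
  qed (simp add: qform_eq_sum_squares)
  finally show ?thesis by (simp add: gauss_term_def)
qed

lemma gauss_term_deriv_le:
  assumes "0 \<le> x" "x \<le> 1" "1/2 \<le> y" "y \<le> 1" "0 \<le> \<alpha>"
  shows "\<bar>gauss_term_deriv \<alpha> ((x, y), (u, v)) h\<bar>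
           \<le> gauss_term \<alpha> ((x, y), (u, v)) * (28 * pi * \<alpha> * (1 + u\<^sup>2 + v\<^sup>2) * norm h)"
proof -
  obtain a b du dv where h: "h = ((a, b), (du, dv))" by (metis prod.collapse)
  define H where "H = norm h"
  define dq where "dq = 2 * (u + x * v) * (du + v * a + x * dv) + 2 * y * v * (v * b + y * dv)"
  define Q where "Q = qform (x, y) (u, v)"
  have H: "\<bar>a\<bar> \<le> H" "\<bar>b\<bar> \<le> H" "\<bar>du\<bar> \<le> H" "\<bar>dv\<bar> \<le> H"
    unfolding H_def h by (rule abs_components_le_norm)+
  have y: "0 < y" "1 \<le> 2 * y" "1 \<le> 4 * y\<^sup>2"
    using assms power_mono[of "1/2" y 2] by (simp_all add: power2_eq_square)
  have dq: "\<bar>dq\<bar> \<le> 8 * (1 + u\<^sup>2 + v\<^sup>2) * H"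
    unfolding dq_def by (rule qform_deriv_bound) (use assms H in auto)
  have dq_y: "\<bar>dq / y\<bar> \<le> 2 * \<bar>dq\<bar>"
    using y mult_left_mono[of 1 "2 * y" "\<bar>dq\<bar>"] by (simp add: divide_le_eq algebra_simps)
  have Q: "0 \<le> Q" "Q \<le> 3 * (u\<^sup>2 + v\<^sup>2)"
    unfolding Q_def using assms by (simp add: qform_eq_sum_squares, intro qform_upper_bound, auto)
  then have "Q * \<bar>b\<bar> \<le> 3 * (u\<^sup>2 + v\<^sup>2) * H"
    using H(2) by (intro mult_mono) auto
  then have Qb: "\<bar>Q * b / y\<^sup>2\<bar> \<le> 4 * (3 * (u\<^sup>2 + v\<^sup>2) * H)"
    using y Q H(2) mult_left_mono[of 1 "4 * y\<^sup>2" "3 * (u\<^sup>2 + v\<^sup>2) * H"]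
    by (simp add: abs_mult divide_le_eq algebra_simps)
  have "\<bar>dq / y - Q * b / y\<^sup>2\<bar> \<le> 28 * (1 + u\<^sup>2 + v\<^sup>2) * H"
    using dq dq_y Qb abs_triangle_ineq4[of "dq / y" "Q * b / y\<^sup>2"] zero_le_power2[of u] zero_le_power2[of v] H(1)
    unfolding distrib_left distrib_right by linarith
  then have "gauss_term \<alpha> ((x, y), (u, v)) * (pi * \<alpha>) * \<bar>dq / y - Q * b / y\<^sup>2\<bar>
      \<le> gauss_term \<alpha> ((x, y), (u, v)) * (pi * \<alpha>) * (28 * (1 + u\<^sup>2 + v\<^sup>2) * H)"
    using assms gauss_term_pos[of \<alpha> "((x, y), (u, v))"] by (intro mult_left_mono) auto
  then show ?thesis
    using assms gauss_term_pos[of \<alpha> "((x, y), (u, v))"]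
    by (simp add: gauss_term_deriv_def h H_def dq_def Q_def abs_mult mult_ac)
qed

definition int_sqnorm :: "int \<times> int \<Rightarrow> real" where
  "int_sqnorm n = (of_int (fst n))\<^sup>2 + (of_int (snd n))\<^sup>2"

lemma int_sqnorm_nonneg: "0 \<le> int_sqnorm n"
  by (simp add: int_sqnorm_def)

lemma abs_of_int_le_square: "\<bar>of_int k\<bar> \<le> (of_int k :: real)\<^sup>2"
proof (cases "k = 0")
  case False
  then have "\<bar>of_int k\<bar> * 1 \<le> \<bar>of_int k\<bar> * \<bar>of_int k :: real\<bar>"
    by (intro mult_left_mono) auto
  then show ?thesis by (simp add: power2_eq_square)
qed simp

lemma summable_on_exp_neg_abs_int:
  fixes \<gamma> :: real
  assumes "\<gamma> > 0"
  shows "(\<lambda>k::int. exp (- \<gamma> * \<bar>of_int k\<bar>)) summable_on UNIV"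
proof -
  let ?f = "\<lambda>k::int. exp (- \<gamma> * \<bar>of_int k\<bar>)"
  have geometric: "(\<lambda>n::nat. exp (- \<gamma>) ^ n) summable_on UNIV"
    using assms by (intro summable_nonneg_imp_summable_on summable_geometric) auto
  have "?f \<circ> int = (\<lambda>n. exp (- \<gamma>) ^ n)" "?f \<circ> (\<lambda>n. - int n) = (\<lambda>n. exp (- \<gamma>) ^ n)"
    by (simp_all add: fun_eq_iff exp_of_nat_mult[symmetric] mult.commute)
  then have "?f summable_on range int" "?f summable_on range (\<lambda>n. - int n)"
    using geometric by (simp_all add: summable_on_reindex inj_on_def)
  then have "?f summable_on (range int \<union> range (\<lambda>n. - int n))"
    by (rule summable_on_union)
  moreover have "range int \<union> range (\<lambda>n. - int n) = UNIV"
  proof -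
    have "k \<in> range int \<union> range (\<lambda>n. - int n)" for k :: int
      by (cases k rule: int_cases2) auto
    then show ?thesis by blast
  qed
  ultimately show ?thesis by simp
qed

lemma summable_on_exp_neg_abs_lattice:
  fixes \<gamma> :: real
  assumes "\<gamma> > 0"
  shows "(\<lambda>n::int \<times> int. exp (- \<gamma> * (\<bar>of_int (fst n)\<bar> + \<bar>of_int (snd n)\<bar>))) summable_on UNIV"
proof -
  define a where "a = (\<lambda>k::int. exp (- \<gamma> * \<bar>of_int k\<bar>))"
  have a: "a summable_on UNIV"
    unfolding a_def by (rule summable_on_exp_neg_abs_int[OF assms])
  have "(\<lambda>n. a (fst n) * a (snd n)) summable_on Sigma UNIV (\<lambda>_. UNIV)"
  proof (rule summable_on_SigmaI)
    show "((\<lambda>l. a (fst (k, l)) * a (snd (k, l))) has_sum a k * infsum a UNIV) UNIV" for k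
      using has_sum_cmult_right[OF has_sum_infsum[OF a], of "a k"] by simp
  qed (use a in \<open>auto simp: a_def intro: summable_on_cmult_left\<close>)
  then show ?thesis
    by (simp add: a_def exp_add[symmetric] algebra_simps)
qed

lemma one_plus_mult_exp_neg_le:
  fixes \<beta> t :: real
  assumes "\<beta> > 0" "t \<ge> 0"
  shows "(1 + t) * exp (- \<beta> * t) \<le> (1 + 2 / \<beta>) * exp (- (\<beta> / 2) * t)"
proof -
  have "1 + \<beta> * t / 2 \<le> exp (\<beta> * t / 2)"
    using exp_ge_add_one_self[of "\<beta> * t / 2"] by simp
  then have "t * exp (- \<beta> * t) \<le> 2 / \<beta> * exp (\<beta> * t / 2) * exp (- \<beta> * t)"
    using assms by (intro mult_right_mono) (simp_all add: field_simps)
  also have "\<dots> = 2 / \<beta> * exp (- (\<beta> / 2) * t)"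
    by (simp add: mult.assoc exp_add[symmetric])
  finally have "t * exp (- \<beta> * t) \<le> 2 / \<beta> * exp (- (\<beta> / 2) * t)" .
  moreover have "exp (- \<beta> * t) \<le> exp (- (\<beta> / 2) * t)"
    using assms by simp
  ultimately show ?thesis
    unfolding distrib_right mult_1 by linarith
qed

lemma summable_on_gaussian_lattice_weight:
  fixes \<beta> :: real
  assumes "\<beta> > 0"
  shows "(\<lambda>n. (1 + int_sqnorm n) * exp (- \<beta> * int_sqnorm n)) summable_on UNIV"
proof (rule summable_on_comparison_test)
  show "(\<lambda>n::int \<times> int. (1 + 2 / \<beta>) * exp (- (\<beta> / 2) * (\<bar>of_int (fst n)\<bar> + \<bar>of_int (snd n)\<bar>))) summable_on UNIV"
    using assms by (intro summable_on_cmult_right summable_on_exp_neg_abs_lattice) auto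
next
  fix n :: "int \<times> int"
  have "\<bar>of_int (fst n)\<bar> + \<bar>of_int (snd n)\<bar> \<le> int_sqnorm n"
    unfolding int_sqnorm_def by (intro add_mono abs_of_int_le_square)
  then show "(1 + int_sqnorm n) * exp (- \<beta> * int_sqnorm n)
      \<le> (1 + 2 / \<beta>) * exp (- (\<beta> / 2) * (\<bar>of_int (fst n)\<bar> + \<bar>of_int (snd n)\<bar>))"
    using assms one_plus_mult_exp_neg_le[OF assms int_sqnorm_nonneg[of n]]
    by (elim order_trans) (intro mult_left_mono, simp_all)
qed (simp add: int_sqnorm_nonneg)

lemma power2_add_le: "(a + b)\<^sup>2 \<le> 2 * a\<^sup>2 + 2 * (b::real)\<^sup>2"
  using zero_le_power2[of "a - b"] by (simp add: power2_eq_square algebra_simps)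

lemma power2_shift_bounds:
  fixes a c :: real
  assumes "\<bar>c\<bar> \<le> 1"
  shows "a\<^sup>2 \<le> 2 * (c + a)\<^sup>2 + 2" "(c + a)\<^sup>2 \<le> 2 * a\<^sup>2 + 2"
proof -
  have "c\<^sup>2 \<le> 1" using assms abs_le_square_iff[of c 1] by simp
  then show "a\<^sup>2 \<le> 2 * (c + a)\<^sup>2 + 2" "(c + a)\<^sup>2 \<le> 2 * a\<^sup>2 + 2"
    using power2_add_le[of "c + a" "- c"] power2_add_le[of a c] by (simp_all add: add.commute)
qed

lemma gauss_term_lattice_bounds:
  fixes k l :: int
  assumes "0 \<le> x" "x \<le> 1" "1/2 \<le> y" "y \<le> 1" "\<bar>a\<bar> \<le> 1" "\<bar>b\<bar> \<le> 1" "0 \<le> \<alpha>"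
  defines "w \<equiv> ((x, y), (a + of_int k, b + of_int l))" and "t \<equiv> int_sqnorm (k, l)"
  shows "gauss_term \<alpha> w \<le> exp (pi * \<alpha> / 8) * exp (- (pi * \<alpha> / 32) * t)"
    and "\<bar>gauss_term_deriv \<alpha> w h\<bar> \<le> exp (pi * \<alpha> / 8) * (140 * pi * \<alpha>) * (1 + t) * exp (- (pi * \<alpha> / 32) * t) * norm h"
proof -
  define s where "s = (a + of_int k)\<^sup>2 + (b + of_int l)\<^sup>2"
  have "t \<le> 2 * s + 4" "1 + s \<le> 5 * (1 + t)"
    using power2_shift_bounds[OF assms(5), of "of_int k"] power2_shift_bounds[OF assms(6), of "of_int l"]
      zero_le_power2[of "real_of_int k"] zero_le_power2[of "real_of_int l"]
    unfolding s_def t_def int_sqnorm_def fst_conv snd_conv distrib_left by linarith+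
  then have exponent: "- (pi * \<alpha> / 16) * s \<le> pi * \<alpha> / 8 + - (pi * \<alpha> / 32) * t"
    using assms(7) mult_left_mono[of t "2 * s + 4" "pi * \<alpha> / 32"] by (simp add: algebra_simps)
  have "gauss_term \<alpha> w \<le> exp (- (pi * \<alpha> / 16) * s)"
    unfolding w_def s_def by (rule gauss_term_le) (use assms in auto)
  also have "\<dots> \<le> exp (pi * \<alpha> / 8) * exp (- (pi * \<alpha> / 32) * t)"
    using exponent by (simp add: exp_add[symmetric])
  finally show bound: "gauss_term \<alpha> w \<le> exp (pi * \<alpha> / 8) * exp (- (pi * \<alpha> / 32) * t)" .
  have "\<bar>gauss_term_deriv \<alpha> w h\<bar> \<le> gauss_term \<alpha> w * (28 * pi * \<alpha> * (1 + s) * norm h)"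
    unfolding w_def s_def using gauss_term_deriv_le[OF assms(1-4,7)] by (simp add: add.assoc)
  also have "\<dots> \<le> exp (pi * \<alpha> / 8) * exp (- (pi * \<alpha> / 32) * t) * (28 * pi * \<alpha> * (5 * (1 + t)) * norm h)"
    using assms(7) \<open>1 + s \<le> 5 * (1 + t)\<close>
    by (intro mult_mono bound mult_right_mono mult_left_mono) (simp_all add: s_def less_imp_le[OF gauss_term_pos])
  also have "\<dots> = exp (pi * \<alpha> / 8) * (140 * pi * \<alpha>) * (1 + t) * exp (- (pi * \<alpha> / 32) * t) * norm h"
    by (simp only: mult_ac)
  finally show "\<bar>gauss_term_deriv \<alpha> w h\<bar> \<le> exp (pi * \<alpha> / 8) * (140 * pi * \<alpha>) * (1 + t) * exp (- (pi * \<alpha> / 32) * t) * norm h" .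
qed

section \<open>Termwise differentiation\<close>

lemma series_has_derivative_dominated:
  fixes f :: "nat \<Rightarrow> 'a::real_normed_vector \<Rightarrow> 'b::banach"
  assumes S: "convex S" "open S" "x \<in> S"
    and f: "\<And>n p. p \<in> S \<Longrightarrow> (f n has_derivative f' n p) (at p)"
    and f'_le: "\<And>n p h. p \<in> S \<Longrightarrow> norm (f' n p h) \<le> M n * norm h"
    and f_le: "\<And>n p. p \<in> S \<Longrightarrow> norm (f n p) \<le> M n"
    and M: "summable M"
  shows "((\<lambda>p. \<Sum>n. f n p) has_derivative (\<lambda>h. \<Sum>n. f' n x h)) (at x)"
proof -
  have sums: "(\<lambda>n. f n p) sums (\<Sum>n. f n p)" if "p \<in> S" for p
    using summable_comparison_test'[OF M f_le[OF that]] by (simp add: summable_norm_cancel summable_sums)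
  define g' where "g' p h = (\<Sum>n. f' n p h)" for p h
  have uniform: "\<forall>\<^sub>F N in sequentially. \<forall>p\<in>S. \<forall>h. norm ((\<Sum>n<N. f' n p h) - g' p h) \<le> e * norm h"
    if e: "e > 0" for e
  proof -
    obtain N0 where N0: "\<And>N. N \<ge> N0 \<Longrightarrow> norm (\<Sum>n. M (n + N)) < e"
      using suminf_exist_split[OF e M] by blast
    show ?thesis unfolding eventually_sequentially
    proof (intro exI[of _ N0] allI impI ballI)
      fix N p and h :: 'a assume N: "N0 \<le> N" and p: "p \<in> S"
      have Mh: "summable (\<lambda>n. M n * norm h)" by (rule summable_mult2[OF M])
      have f'h: "summable (\<lambda>n. norm (f' n p h))"
        by (rule summable_comparison_test'[OF Mh]) (use f'_le[OF p] in auto)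
      have "norm ((\<Sum>n<N. f' n p h) - g' p h) = norm (\<Sum>n. f' (n + N) p h)"
        unfolding g'_def using suminf_minus_initial_segment[OF summable_norm_cancel[OF f'h], of N]
        by (simp add: norm_minus_commute)
      also have "\<dots> \<le> (\<Sum>n. norm (f' (n + N) p h))"
        by (rule summable_norm[OF summable_ignore_initial_segment[OF f'h]])
      also have "\<dots> \<le> (\<Sum>n. M (n + N) * norm h)"
        using f'_le[OF p] summable_ignore_initial_segment[OF f'h] summable_ignore_initial_segment[OF Mh]
        by (intro suminf_le) auto
      also have "\<dots> = (\<Sum>n. M (n + N)) * norm h"
        by (rule suminf_mult2[OF summable_ignore_initial_segment[OF M], symmetric])
      also have "\<dots> \<le> e * norm h"
        using N0[OF N] by (intro mult_right_mono) auto
      finally show "norm ((\<Sum>n<N. f' n p h) - g' p h) \<le> e * norm h" .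
    qed
  qed
  obtain g where g: "\<And>p. p \<in> S \<Longrightarrow> (\<lambda>n. f n p) sums g p"
      "\<And>p. p \<in> S \<Longrightarrow> (g has_derivative g' p) (at p within S)"
    using has_derivative_series[OF S(1) has_derivative_at_withinI[OF f] uniform S(3) sums[OF S(3)]] by blast
  have "(g has_derivative g' x) (at x)"
    using g(2)[OF S(3)] at_within_open[OF S(3,2)] by simp
  then show ?thesis
    unfolding g'_def
    by (rule has_derivative_transform_within_open[OF _ S(2,3)]) (rule sums_unique2[OF g(1) sums])
qed

lemma infsum_differentiable_dominated:
  fixes f :: "'i::countable \<Rightarrow> 'a::real_normed_vector \<Rightarrow> 'b::banach"
  assumes "infinite (UNIV :: 'i set)" and S: "convex S" "open S" "x \<in> S"
    and f: "\<And>n p. p \<in> S \<Longrightarrow> (f n has_derivative f' n p) (at p)"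
    and f'_le: "\<And>n p h. p \<in> S \<Longrightarrow> norm (f' n p h) \<le> M n * norm h"
    and f_le: "\<And>n p. p \<in> S \<Longrightarrow> norm (f n p) \<le> M n"
    and M: "M summable_on UNIV"
  shows "(\<lambda>p. \<Sum>\<^sub>\<infinity>n. f n p) differentiable (at x)"
proof -
  define e where "e = from_nat_into (UNIV :: 'i set)"
  have e: "bij_betw e UNIV UNIV"
    unfolding e_def using assms(1) by (intro bij_betw_from_nat_into) auto
  have Me: "summable (\<lambda>i. M (e i))"
    using M by (intro summable_on_imp_summable) (simp add: summable_on_reindex_bij_betw[OF e])
  have infsum_eq: "(\<Sum>\<^sub>\<infinity>n. f n p) = (\<Sum>i. f (e i) p)" if "p \<in> S" for p
  proof -
    have s: "summable (\<lambda>i. norm (f (e i) p))"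
      by (rule summable_comparison_test'[OF Me]) (simp add: f_le[OF that])
    have "((\<lambda>i. f (e i) p) has_sum (\<Sum>i. f (e i) p)) UNIV"
      by (rule norm_summable_imp_has_sum[OF s summable_sums[OF summable_norm_cancel[OF s]]])
    then have "(\<Sum>\<^sub>\<infinity>i. f (e i) p) = (\<Sum>i. f (e i) p)"
      by (rule infsumI)
    then show ?thesis
      using infsum_reindex_bij_betw[OF e, of "\<lambda>n. f n p"] by simp
  qed
  have "((\<lambda>p. \<Sum>i. f (e i) p) has_derivative (\<lambda>h. \<Sum>i. f' (e i) x h)) (at x)"
    by (rule series_has_derivative_dominated[OF S f f'_le f_le Me])
  then have "((\<lambda>p. \<Sum>\<^sub>\<infinity>n. f n p) has_derivative (\<lambda>h. \<Sum>i. f' (e i) x h)) (at x)"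
    by (rule has_derivative_transform_within_open[OF _ S(2,3)]) (erule infsum_eq[symmetric])
  then show ?thesis
    unfolding differentiable_def by blast
qed

lemma lattice_sum_differentiable:
  fixes f :: "int \<times> int \<Rightarrow> 'a::real_normed_vector \<Rightarrow> 'b::banach"
  assumes S: "convex S" "open S" "x \<in> S" and "\<beta> > 0"
    and f_le: "\<And>n p. p \<in> S \<Longrightarrow> norm (f n p) \<le> C * exp (- \<beta> * int_sqnorm n)"
    and f_deriv: "\<And>n p. p \<in> S \<Longrightarrow> \<exists>D. (f n has_derivative D) (at p) \<and>
                    (\<forall>h. norm (D h) \<le> C * (1 + int_sqnorm n) * exp (- \<beta> * int_sqnorm n) * norm h)"
  shows "(\<lambda>p. \<Sum>\<^sub>\<infinity>n. f n p) differentiable (at x)"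
proof -
  define M where "M n = C * ((1 + int_sqnorm n) * exp (- \<beta> * int_sqnorm n))" for n
  define f' where "f' n p = (SOME D. (f n has_derivative D) (at p) \<and>
                    (\<forall>h. norm (D h) \<le> C * (1 + int_sqnorm n) * exp (- \<beta> * int_sqnorm n) * norm h))" for n p
  have f': "(f n has_derivative f' n p) (at p)" "norm (f' n p h) \<le> M n * norm h" if "p \<in> S" for n p h
    using someI_ex[OF f_deriv[OF that, of n]] unfolding f'_def M_def by (simp_all add: mult.assoc)
  have "0 \<le> C * exp (- \<beta> * int_sqnorm n)" for n
    using order_trans[OF norm_ge_zero f_le[OF S(3)]] .
  then have C: "0 \<le> C" by (simp add: zero_le_mult_iff)
  have "norm (f n p) \<le> M n" if "p \<in> S" for n p
  proof -
    have "C * exp (- \<beta> * int_sqnorm n) \<le> M n"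
      unfolding M_def using C by (intro mult_left_mono) (simp_all add: int_sqnorm_nonneg)
    then show ?thesis using f_le[OF that, of n] by linarith
  qed
  moreover have "M summable_on UNIV"
    unfolding M_def using \<open>\<beta> > 0\<close> by (intro summable_on_cmult_right summable_on_gaussian_lattice_weight)
  ultimately show ?thesis
    using f' by (intro infsum_differentiable_dominated[OF _ S]) (simp_all add: finite_prod)
qed

section \<open>Differentiability of the theta sums at the hexagonal point\<close>

definition theta_term :: "real \<Rightarrow> int \<times> int \<Rightarrow> (real \<times> real) \<times> (real \<times> real) \<Rightarrow> real" where
  "theta_term \<alpha> n p = gauss_term \<alpha> (p + ((0, 0), (of_int (fst n), of_int (snd n))))"

definition theta_hat_term :: "real \<Rightarrow> int \<times> int \<Rightarrow> (real \<times> real) \<times> (real \<times> real) \<Rightarrow> complex" where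
  "theta_hat_term \<alpha> n p = complex_of_real (gauss_term \<alpha> (fst p, (of_int (fst n), of_int (snd n))))
     * cis (2 * pi * (of_int (fst n) * snd (snd p) - of_int (snd n) * fst (snd p)))"

lemma theta_eq_infsum: "theta z c \<alpha> = (\<Sum>\<^sub>\<infinity>n. theta_term \<alpha> n (z, c))"
  by (cases z, cases c) (simp add: theta_def theta_term_def gauss_term_def qform_def case_prod_unfold add.commute)

lemma theta_hat_eq_infsum: "theta_hat z c \<alpha> = (\<Sum>\<^sub>\<infinity>n. theta_hat_term \<alpha> n (z, c))"
  by (cases z, cases c) (simp add: theta_hat_def theta_hat_term_def gauss_term_def qform_def case_prod_unfold)

definition hex_point :: "(real \<times> real) \<times> (real \<times> real)" where
  "hex_point = ((1/2, sqrt 3 / 2), (1/3, 1/3))"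

lemma ball_hex_point_bounds:
  assumes "((x, y), (c1, c2)) \<in> ball hex_point (1/10)"
  shows "0 \<le> x" "x \<le> 1" "1/2 \<le> y" "y \<le> 1" "\<bar>c1\<bar> \<le> 1" "\<bar>c2\<bar> \<le> 1"
proof -
  have d: "dist ((x, y), (c1, c2)) hex_point < 1/10" using assms by (simp add: dist_commute)
  have "dist x (1/2) < 1/10" "dist y (sqrt 3 / 2) < 1/10" "dist c1 (1/3) < 1/10" "dist c2 (1/3) < 1/10"
    using d dist_fst_le[of "((x, y), (c1, c2))" hex_point] dist_snd_le[of "((x, y), (c1, c2))" hex_point]
      dist_fst_le[of "(x, y)" "fst hex_point"] dist_snd_le[of "(x, y)" "fst hex_point"]
      dist_fst_le[of "(c1, c2)" "snd hex_point"] dist_snd_le[of "(c1, c2)" "snd hex_point"]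
    by (simp_all add: hex_point_def)
  moreover have "17/10 < sqrt 3"
    by (rule real_less_rsqrt) (simp add: power2_eq_square)
  moreover have "sqrt 3 < 18/10"
  proof -
    have "sqrt 3 < sqrt ((18/10)\<^sup>2)"
      by (subst real_sqrt_less_iff) (simp add: power2_eq_square)
    then show ?thesis by simp
  qed
  ultimately show "0 \<le> x" "x \<le> 1" "1/2 \<le> y" "y \<le> 1" "\<bar>c1\<bar> \<le> 1" "\<bar>c2\<bar> \<le> 1"
    unfolding dist_real_def abs_less_iff abs_le_iff by auto
qed

lemma theta_term_has_derivative:
  assumes "snd (fst p) \<noteq> 0"
  shows "(theta_term \<alpha> n has_derivative gauss_term_deriv \<alpha> (p + ((0, 0), (of_int (fst n), of_int (snd n))))) (at p)"
proof -
  have "(gauss_term \<alpha> has_derivative gauss_term_deriv \<alpha> (p + ((0, 0), (of_int (fst n), of_int (snd n)))))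
          (at (p + ((0, 0), (of_int (fst n), of_int (snd n)))))"
    using assms by (intro gauss_term_has_derivative) simp
  then show ?thesis
    using diff_chain_at[OF has_derivative_add_const[OF has_derivative_ident]]
    by (simp add: theta_term_def[abs_def] o_def)
qed

lemma gauss_term_fixed_lattice_point_has_derivative:
  fixes w :: "real \<times> real"
  assumes "snd (fst p) \<noteq> 0"
  shows "((\<lambda>p. gauss_term \<alpha> (fst p, w)) has_derivative (\<lambda>h. gauss_term_deriv \<alpha> (fst p, w) (fst h, 0))) (at p)"
proof -
  have "((\<lambda>p. (fst p, w)) has_derivative (\<lambda>h. (fst h, 0))) (at p)"
    by (intro has_derivative_Pair has_derivative_fst has_derivative_ident has_derivative_const)
  moreover have "(gauss_term \<alpha> has_derivative gauss_term_deriv \<alpha> (fst p, w)) (at (fst p, w))"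
    using assms by (intro gauss_term_has_derivative) simp
  ultimately show ?thesis
    using diff_chain_at by (fastforce simp: o_def)
qed

lemma lattice_phase_deriv_le:
  fixes k l :: int and h :: "(real \<times> real) \<times> (real \<times> real)"
  shows "\<bar>2 * pi * (of_int k * snd (snd h) - of_int l * fst (snd h))\<bar> \<le> 2 * pi * ((1 + int_sqnorm (k, l)) * norm h)"
proof -
  obtain a b c d where h: "h = ((a, b), (c, d))" by (metis prod.collapse)
  have "\<bar>of_int k * d\<bar> \<le> \<bar>of_int k\<bar> * norm h" "\<bar>of_int l * c\<bar> \<le> \<bar>of_int l\<bar> * norm h"
    unfolding h abs_mult by (intro mult_left_mono abs_components_le_norm abs_ge_zero)+
  then have "\<bar>of_int k * d - of_int l * c\<bar> \<le> \<bar>of_int k\<bar> * norm h + \<bar>of_int l\<bar> * norm h"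
    using abs_triangle_ineq4[of "of_int k * d" "of_int l * c"] by linarith
  also have "\<dots> \<le> (1 + int_sqnorm (k, l)) * norm h"
    using abs_of_int_le_square[of k] abs_of_int_le_square[of l]
    by (simp add: int_sqnorm_def mult_right_mono flip: distrib_right)
  finally show ?thesis by (simp add: abs_mult h)
qed

lemma theta_sum_differentiable:
  assumes "\<alpha> > 0"
  shows "(\<lambda>p. \<Sum>\<^sub>\<infinity>n. theta_term \<alpha> n p) differentiable (at hex_point)"
proof (rule lattice_sum_differentiable[where \<beta> = "pi * \<alpha> / 32" and C = "exp (pi * \<alpha> / 8) * (1 + 140 * pi * \<alpha>)"])
  show "convex (ball hex_point (1/10))" "open (ball hex_point (1/10))" "hex_point \<in> ball hex_point (1/10)"
    by simp_all
  show "pi * \<alpha> / 32 > 0" using assms by simp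
  fix n :: "int \<times> int" and p
  assume "p \<in> ball hex_point (1/10)"
  moreover obtain x y c1 c2 where p: "p = ((x, y), (c1, c2))" by (metis prod.collapse)
  ultimately have R: "0 \<le> x" "x \<le> 1" "1/2 \<le> y" "y \<le> 1" "\<bar>c1\<bar> \<le> 1" "\<bar>c2\<bar> \<le> 1"
    using ball_hex_point_bounds[of x y c1 c2] by simp_all
  obtain k l where n: "n = (k, l)" by (cases n)
  define w where "w = ((x, y), (c1 + of_int k, c2 + of_int l))"
  note bounds = gauss_term_lattice_bounds[OF R less_imp_le[OF assms], of k l, folded w_def n]
  have "norm (theta_term \<alpha> n p) = gauss_term \<alpha> w"
    using gauss_term_pos[of \<alpha> w] by (simp add: theta_term_def p n w_def)
  also have "\<dots> \<le> exp (pi * \<alpha> / 8) * exp (- (pi * \<alpha> / 32) * int_sqnorm n)"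
    using bounds(1) assms by simp
  also have "\<dots> \<le> exp (pi * \<alpha> / 8) * (1 + 140 * pi * \<alpha>) * exp (- (pi * \<alpha> / 32) * int_sqnorm n)"
    using assms by (simp add: algebra_simps)
  finally show "norm (theta_term \<alpha> n p) \<le> exp (pi * \<alpha> / 8) * (1 + 140 * pi * \<alpha>) * exp (- (pi * \<alpha> / 32) * int_sqnorm n)" .
  have "(theta_term \<alpha> n has_derivative gauss_term_deriv \<alpha> w) (at p)"
    using theta_term_has_derivative[of p \<alpha> n] R by (simp add: p n w_def)
  moreover have "norm (gauss_term_deriv \<alpha> w h) \<le> exp (pi * \<alpha> / 8) * (1 + 140 * pi * \<alpha>) * (1 + int_sqnorm n) * exp (- (pi * \<alpha> / 32) * int_sqnorm n) * norm h" for h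
  proof -
    have "norm (gauss_term_deriv \<alpha> w h) \<le> exp (pi * \<alpha> / 8) * (140 * pi * \<alpha>) * (1 + int_sqnorm n) * exp (- (pi * \<alpha> / 32) * int_sqnorm n) * norm h"
      using bounds(2)[of h] by simp
    also have "\<dots> \<le> exp (pi * \<alpha> / 8) * (1 + 140 * pi * \<alpha>) * (1 + int_sqnorm n) * exp (- (pi * \<alpha> / 32) * int_sqnorm n) * norm h"
      by (intro mult_right_mono mult_left_mono) (simp_all add: int_sqnorm_nonneg)
    finally show ?thesis .
  qed
  ultimately show "\<exists>D. (theta_term \<alpha> n has_derivative D) (at p) \<and>
      (\<forall>h. norm (D h) \<le> exp (pi * \<alpha> / 8) * (1 + 140 * pi * \<alpha>) * (1 + int_sqnorm n) * exp (- (pi * \<alpha> / 32) * int_sqnorm n) * norm h)"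
    by blast
qed

lemma theta_hat_sum_differentiable:
  assumes "\<alpha> > 0"
  shows "(\<lambda>p. \<Sum>\<^sub>\<infinity>n. theta_hat_term \<alpha> n p) differentiable (at hex_point)"
proof (rule lattice_sum_differentiable[where \<beta> = "pi * \<alpha> / 32" and C = "exp (pi * \<alpha> / 8) * (1 + 140 * pi * \<alpha> + 2 * pi)"])
  show "convex (ball hex_point (1/10))" "open (ball hex_point (1/10))" "hex_point \<in> ball hex_point (1/10)"
    by simp_all
  show "pi * \<alpha> / 32 > 0" using assms by simp
  fix n :: "int \<times> int" and p
  assume "p \<in> ball hex_point (1/10)"
  moreover obtain x y c1 c2 where p: "p = ((x, y), (c1, c2))" by (metis prod.collapse)
  ultimately have R: "0 \<le> x" "x \<le> 1" "1/2 \<le> y" "y \<le> 1"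
    using ball_hex_point_bounds[of x y c1 c2] by simp_all
  obtain k l where n: "n = (k, l)" by (cases n)
  define q where "q = ((x, y), (of_int k :: real, of_int l :: real))"
  define t where "t = int_sqnorm n"
  define E where "E = exp (pi * \<alpha> / 8) * exp (- (pi * \<alpha> / 32) * t)"
  define \<phi> where "\<phi> = 2 * pi * (of_int k * c2 - of_int l * c1)"
  define d\<phi> where "d\<phi> h = 2 * pi * (of_int k * snd (snd h) - of_int l * fst (snd h))" for h :: "(real \<times> real) \<times> (real \<times> real)"
  have bounds: "gauss_term \<alpha> q \<le> E"
      "\<bar>gauss_term_deriv \<alpha> q h\<bar> \<le> E * (140 * pi * \<alpha>) * (1 + t) * norm h" for h
    using gauss_term_lattice_bounds[OF R, where a = 0 and b = 0 and \<alpha> = \<alpha> and k = k and l = l] assms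
    by (simp_all add: q_def E_def t_def n mult_ac)
  have "norm (theta_hat_term \<alpha> n p) = gauss_term \<alpha> q"
    using gauss_term_pos[of \<alpha> q] by (simp add: theta_hat_term_def p n q_def norm_mult)
  also have "\<dots> \<le> exp (pi * \<alpha> / 8) * 1 * exp (- (pi * \<alpha> / 32) * int_sqnorm n)"
    using bounds(1) by (simp add: E_def t_def)
  also have "\<dots> \<le> exp (pi * \<alpha> / 8) * (1 + 140 * pi * \<alpha> + 2 * pi) * exp (- (pi * \<alpha> / 32) * int_sqnorm n)"
    using assms by (intro mult_right_mono mult_left_mono) simp_all
  finally show "norm (theta_hat_term \<alpha> n p) \<le> exp (pi * \<alpha> / 8) * (1 + 140 * pi * \<alpha> + 2 * pi) * exp (- (pi * \<alpha> / 32) * int_sqnorm n)" .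
  have amplitude: "((\<lambda>p. gauss_term \<alpha> (fst p, (of_int k, of_int l))) has_derivative (\<lambda>h. gauss_term_deriv \<alpha> q (fst h, 0))) (at p)"
    using gauss_term_fixed_lattice_point_has_derivative[of p] R by (simp add: p q_def)
  define D where "D h = complex_of_real (gauss_term_deriv \<alpha> q (fst h, 0)) * cis \<phi>
      + complex_of_real (gauss_term \<alpha> q) * (d\<phi> h *\<^sub>R (\<i> * cis \<phi>))" for h
  have "(theta_hat_term \<alpha> n has_derivative D) (at p)"
    unfolding theta_hat_term_def[abs_def] n fst_conv snd_conv
    by (rule has_derivative_eq_rhs, (rule derivative_eq_intros amplitude refl)+)
       (simp_all add: D_def d\<phi>_def \<phi>_def p q_def fun_eq_iff algebra_simps)
  moreover have "norm (D h) \<le> exp (pi * \<alpha> / 8) * (1 + 140 * pi * \<alpha> + 2 * pi) * (1 + int_sqnorm n) * exp (- (pi * \<alpha> / 32) * int_sqnorm n) * norm h" for h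
  proof -
    have "\<bar>d\<phi> h\<bar> \<le> 2 * pi * ((1 + t) * norm h)"
      using lattice_phase_deriv_le[of k h l] by (simp add: d\<phi>_def t_def n)
    have "norm (fst h, 0 :: real \<times> real) \<le> norm h"
      using norm_fst_le[of "fst h" "snd h"] by (simp add: norm_Pair)
    then have "\<bar>gauss_term_deriv \<alpha> q (fst h, 0)\<bar> \<le> E * (140 * pi * \<alpha>) * (1 + t) * norm h"
      using assms by (intro order_trans[OF bounds(2)] mult_left_mono) (simp_all add: E_def t_def int_sqnorm_nonneg)
    moreover have "gauss_term \<alpha> q * \<bar>d\<phi> h\<bar> \<le> E * (2 * pi * ((1 + t) * norm h))"
      using bounds(1) \<open>\<bar>d\<phi> h\<bar> \<le> _\<close> gauss_term_pos[of \<alpha> q] by (intro mult_mono) simp_all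
    moreover have "norm (D h) \<le> \<bar>gauss_term_deriv \<alpha> q (fst h, 0)\<bar> + gauss_term \<alpha> q * \<bar>d\<phi> h\<bar>"
      unfolding D_def using gauss_term_pos[of \<alpha> q]
      by (intro order_trans[OF norm_triangle_ineq]) (simp add: norm_mult)
    ultimately have "norm (D h) \<le> E * (140 * pi * \<alpha> + 2 * pi) * (1 + t) * norm h"
      by (simp add: algebra_simps)
    also have "\<dots> \<le> E * (1 + 140 * pi * \<alpha> + 2 * pi) * (1 + t) * norm h"
      by (intro mult_right_mono mult_left_mono) (simp_all add: E_def t_def int_sqnorm_nonneg)
    finally show ?thesis
      by (simp add: E_def t_def mult_ac)
  qed
  ultimately show "\<exists>D. (theta_hat_term \<alpha> n has_derivative D) (at p) \<and>
      (\<forall>h. norm (D h) \<le> exp (pi * \<alpha> / 8) * (1 + 140 * pi * \<alpha> + 2 * pi) * (1 + int_sqnorm n) * exp (- (pi * \<alpha> / 32) * int_sqnorm n) * norm h)"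
    by blast
qed

section \<open>Symmetries fixing the hexagonal point\<close>

(* (\<tau>, c) \<mapsto> (1 - conj \<tau>, \<dots>) and (\<tau>, c) \<mapsto> (1 - 1/\<tau>, \<dots>) in the coordinates p = ((x, y), (c1, c2)). *)
definition hex_reflection :: "(real \<times> real) \<times> (real \<times> real) \<Rightarrow> (real \<times> real) \<times> (real \<times> real)" where
  "hex_reflection p = ((1 - fst (fst p), snd (fst p)), (1 - fst (snd p) - snd (snd p), snd (snd p)))"

definition hex_rotation :: "(real \<times> real) \<times> (real \<times> real) \<Rightarrow> (real \<times> real) \<times> (real \<times> real)" where
  "hex_rotation p =
     ((1 - fst (fst p) / ((fst (fst p))\<^sup>2 + (snd (fst p))\<^sup>2), snd (fst p) / ((fst (fst p))\<^sup>2 + (snd (fst p))\<^sup>2)),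
      (1 - fst (snd p) - snd (snd p), fst (snd p)))"

lemma gauss_term_uminus: "gauss_term \<alpha> (z, - w) = gauss_term \<alpha> (z, w)"
  by (simp add: gauss_term_def qform_uminus)

lemma gauss_term_reflect: "gauss_term \<alpha> ((1 - x, y), (u, v)) = gauss_term \<alpha> ((x, y), (u + v, - v))"
  by (simp add: gauss_term_def qform_reflect)

lemma gauss_term_rotate:
  assumes "y \<noteq> 0"
  shows "gauss_term \<alpha> ((1 - x / (x\<^sup>2 + y\<^sup>2), y / (x\<^sup>2 + y\<^sup>2)), (u, v)) = gauss_term \<alpha> ((x, y), (v, - (u + v)))"
proof -
  have "x\<^sup>2 + y\<^sup>2 \<noteq> 0" using assms by (simp add: add_nonneg_eq_0_iff)
  then show ?thesis
    using assms by (simp add: gauss_term_def qform_rotate[OF assms])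
qed

lemma theta_term_reflect: "theta_term \<alpha> (k, l) (hex_reflection p) = theta_term \<alpha> (- k - l - 1, l) p"
proof -
  obtain x y a b where p: "p = ((x, y), (a, b))" by (metis prod.collapse)
  have "theta_term \<alpha> (k, l) (hex_reflection p) = gauss_term \<alpha> ((x, y), - (a + of_int (- k - l - 1), b + of_int l))"
    by (simp add: theta_term_def hex_reflection_def gauss_term_reflect p algebra_simps)
  then show ?thesis
    by (simp only: gauss_term_uminus) (simp add: theta_term_def p)
qed

lemma theta_term_rotate:
  assumes "snd (fst p) \<noteq> 0"
  shows "theta_term \<alpha> (k, l) (hex_rotation p) = theta_term \<alpha> (l, - k - l - 1) p"
proof -
  obtain x y a b where p: "p = ((x, y), (a, b))" by (metis prod.collapse)
  then have "y \<noteq> 0" using assms by simp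
  then show ?thesis
    by (simp add: theta_term_def hex_rotation_def gauss_term_rotate p algebra_simps)
qed

lemma cis_add_int_2pi: "cis (a + 2 * pi * of_int m) = cis a"
  by (simp add: cis_mult[symmetric])

lemma theta_hat_term_reflect: "theta_hat_term \<alpha> (k, l) (hex_reflection p) = theta_hat_term \<alpha> (k + l, - l) p"
proof -
  have "cis (2 * pi * (of_int k * snd (snd p) - of_int l * (1 - fst (snd p) - snd (snd p))))
      = cis (2 * pi * (of_int (k + l) * snd (snd p) - of_int (- l) * fst (snd p)) + 2 * pi * of_int (- l))"
    by (simp add: algebra_simps)
  also have "\<dots> = cis (2 * pi * (of_int (k + l) * snd (snd p) - of_int (- l) * fst (snd p)))"
    by (rule cis_add_int_2pi)
  finally show ?thesis
    by (simp add: theta_hat_term_def hex_reflection_def gauss_term_reflect)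
qed

lemma theta_hat_term_rotate:
  assumes "snd (fst p) \<noteq> 0"
  shows "theta_hat_term \<alpha> (k, l) (hex_rotation p) = theta_hat_term \<alpha> (l, - k - l) p"
proof -
  obtain x y a b where p: "p = ((x, y), (a, b))" by (metis prod.collapse)
  then have "y \<noteq> 0" using assms by simp
  have "cis (2 * pi * (of_int k * a - of_int l * (1 - a - b)))
      = cis (2 * pi * (of_int l * b - of_int (- k - l) * a) + 2 * pi * of_int (- l))"
    by (simp add: algebra_simps)
  also have "\<dots> = cis (2 * pi * (of_int l * b - of_int (- k - l) * a))"
    by (rule cis_add_int_2pi)
  finally show ?thesis
    using \<open>y \<noteq> 0\<close> by (simp add: theta_hat_term_def hex_rotation_def gauss_term_rotate p algebra_simps)
qed

lemma theta_sum_reflect: "(\<Sum>\<^sub>\<infinity>n. theta_term \<alpha> n (hex_reflection p)) = (\<Sum>\<^sub>\<infinity>n. theta_term \<alpha> n p)"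
  by (rule infsum_reindex_bij_witness[where j = "\<lambda>(k, l). (- k - l - 1, l)" and i = "\<lambda>(k, l). (- k - l - 1, l)"])
     (auto simp: theta_term_reflect)

lemma theta_sum_rotate:
  assumes "snd (fst p) \<noteq> 0"
  shows "(\<Sum>\<^sub>\<infinity>n. theta_term \<alpha> n (hex_rotation p)) = (\<Sum>\<^sub>\<infinity>n. theta_term \<alpha> n p)"
  by (rule infsum_reindex_bij_witness[where j = "\<lambda>(k, l). (l, - k - l - 1)" and i = "\<lambda>(k, l). (- k - l - 1, k)"])
     (auto simp: theta_term_rotate[OF assms])

lemma theta_hat_sum_reflect: "(\<Sum>\<^sub>\<infinity>n. theta_hat_term \<alpha> n (hex_reflection p)) = (\<Sum>\<^sub>\<infinity>n. theta_hat_term \<alpha> n p)"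
  by (rule infsum_reindex_bij_witness[where j = "\<lambda>(k, l). (k + l, - l)" and i = "\<lambda>(k, l). (k + l, - l)"])
     (auto simp: theta_hat_term_reflect)

lemma theta_hat_sum_rotate:
  assumes "snd (fst p) \<noteq> 0"
  shows "(\<Sum>\<^sub>\<infinity>n. theta_hat_term \<alpha> n (hex_rotation p)) = (\<Sum>\<^sub>\<infinity>n. theta_hat_term \<alpha> n p)"
  by (rule infsum_reindex_bij_witness[where j = "\<lambda>(k, l). (l, - k - l)" and i = "\<lambda>(k, l). (- k - l, k)"])
     (auto simp: theta_hat_term_rotate[OF assms])

lemma hex_reflection_fixes: "hex_reflection hex_point = hex_point"
  by (simp add: hex_reflection_def hex_point_def)

lemma hex_rotation_fixes: "hex_rotation hex_point = hex_point"
  by (simp add: hex_rotation_def hex_point_def power_divide)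

definition hex_reflection_deriv :: "(real \<times> real) \<times> (real \<times> real) \<Rightarrow> (real \<times> real) \<times> (real \<times> real)" where
  "hex_reflection_deriv h = ((- fst (fst h), snd (fst h)), (- fst (snd h) - snd (snd h), snd (snd h)))"

definition hex_rotation_deriv :: "(real \<times> real) \<times> (real \<times> real) \<Rightarrow> (real \<times> real) \<times> (real \<times> real)" where
  "hex_rotation_deriv h =
     ((- fst (fst h) / 2 + sqrt 3 / 2 * snd (fst h), - sqrt 3 / 2 * fst (fst h) - snd (fst h) / 2),
      (- fst (snd h) - snd (snd h), fst (snd h)))"

lemma hex_reflection_has_derivative: "(hex_reflection has_derivative hex_reflection_deriv) (at p)"
  unfolding hex_reflection_def[abs_def] hex_reflection_deriv_def[abs_def]
  by (rule has_derivative_eq_rhs, (rule derivative_eq_intros refl)+) (simp add: fun_eq_iff)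

lemma hex_rotation_has_derivative: "(hex_rotation has_derivative hex_rotation_deriv) (at hex_point)"
proof -
  have r: "(fst (fst hex_point))\<^sup>2 + (snd (fst hex_point))\<^sup>2 = 1"
    by (simp add: hex_point_def power_divide)
  then have r0: "(fst (fst hex_point))\<^sup>2 + (snd (fst hex_point))\<^sup>2 \<noteq> 0" by simp
  show ?thesis
    unfolding hex_rotation_def[abs_def] hex_rotation_deriv_def[abs_def]
    by (rule has_derivative_eq_rhs, (rule derivative_eq_intros refl r0)+)
       (simp add: r fun_eq_iff, simp add: hex_point_def power2_eq_square algebra_simps)
qed

lemma has_derivative_invariant:
  assumes G: "(G has_derivative L) (at p)" and S: "(S has_derivative D) (at p)" "S p = p"
    and U: "open U" "p \<in> U" and inv: "\<And>q. q \<in> U \<Longrightarrow> G (S q) = G q"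
  shows "L \<circ> D = L"
proof (rule has_derivative_unique)
  show "((G \<circ> S) has_derivative L \<circ> D) (at p)"
    using G S by (intro diff_chain_at) simp_all
  show "((G \<circ> S) has_derivative L) (at p)"
    by (rule has_derivative_transform_within_open[OF G U]) (simp add: inv)
qed

lemma linear_hex_invariant_eq_zero:
  fixes L :: "(real \<times> real) \<times> (real \<times> real) \<Rightarrow> 'b::real_vector"
  assumes "linear L" and "L \<circ> hex_reflection_deriv = L" and "L \<circ> hex_rotation_deriv = L"
  shows "L = (\<lambda>h. 0)"
proof
  fix h :: "(real \<times> real) \<times> (real \<times> real)"
  obtain a b c d where h: "h = ((a, b), (c, d))" by (metis prod.collapse)
  define v1 :: "(real \<times> real) \<times> (real \<times> real)" where "v1 = (((a + sqrt 3 * b / 3) / 2, 0), ((c - d) / 2, 0))"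
  define v2 :: "(real \<times> real) \<times> (real \<times> real)" where "v2 = ((0, 2 * b / 3), (0, d))"
  have "h = (v1 - hex_reflection_deriv v1) + (v2 - hex_rotation_deriv v2)"
    by (simp add: h v1_def v2_def hex_reflection_deriv_def hex_rotation_deriv_def algebra_simps)
  then have "L h = (L v1 - L (hex_reflection_deriv v1)) + (L v2 - L (hex_rotation_deriv v2))"
    by (simp add: linear_add[OF assms(1)] linear_diff[OF assms(1)])
  also have "\<dots> = 0"
    using assms(2,3) by (metis comp_apply diff_self add_0)
  finally show "L h = 0" .
qed

lemma hex_invariant_has_derivative_zero:
  fixes G :: "(real \<times> real) \<times> (real \<times> real) \<Rightarrow> 'b::real_normed_vector"
  assumes "G differentiable (at hex_point)"
    and refl: "\<And>p. 0 < snd (fst p) \<Longrightarrow> G (hex_reflection p) = G p"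
    and rot: "\<And>p. 0 < snd (fst p) \<Longrightarrow> G (hex_rotation p) = G p"
  shows "(G has_derivative (\<lambda>h. 0)) (at hex_point)"
proof -
  obtain L where L: "(G has_derivative L) (at hex_point)"
    using assms(1) unfolding differentiable_def by blast
  have U: "open {p :: (real \<times> real) \<times> (real \<times> real). 0 < snd (fst p)}" "hex_point \<in> {p. 0 < snd (fst p)}"
    by (intro open_Collect_less continuous_intros) (simp add: hex_point_def)
  have "L \<circ> hex_reflection_deriv = L"
    by (rule has_derivative_invariant[OF L hex_reflection_has_derivative hex_reflection_fixes U]) (simp add: refl)
  moreover have "L \<circ> hex_rotation_deriv = L"
    by (rule has_derivative_invariant[OF L hex_rotation_has_derivative hex_rotation_fixes U]) (simp add: rot)
  ultimately have "L = (\<lambda>h. 0)"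
    using has_derivative_linear[OF L] by (intro linear_hex_invariant_eq_zero)
  then show ?thesis
    using L by simp
qed

lemma has_derivative_zero_along_graph:
  assumes "(G has_derivative (\<lambda>h. 0)) (at (z, c z))" and "c differentiable (at z)"
  shows "((\<lambda>z. G (z, c z)) has_derivative (\<lambda>h. 0)) (at z)"
proof -
  obtain D where "(c has_derivative D) (at z)"
    using assms(2) unfolding differentiable_def by blast
  then have "((\<lambda>z. (z, c z)) has_derivative (\<lambda>h. (h, D h))) (at z)"
    by (intro has_derivative_Pair has_derivative_ident)
  moreover have "(G has_derivative (\<lambda>h. 0)) (at ((\<lambda>z. (z, c z)) z))"
    using assms(1) by simp
  ultimately show ?thesis
    using diff_chain_at by (fastforce simp: o_def)
qed

theorem lemma4p2:
  fixes c :: "real \<times> real \<Rightarrow> real \<times> real" and U :: "(real \<times> real) set" and \<alpha> :: real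
  assumes "open U"
    and "U \<subseteq> {(x, y). y > 0}"
    and "\<And>y. y > 0 \<Longrightarrow> (1/2, y) \<in> U"
    and "\<And>p. p \<in> U \<Longrightarrow> c differentiable (at p)"
    and "\<And>y. y > 0 \<Longrightarrow> c (1/2, y) = circ_a (1/2, y)"
    and "\<And>x y. (x, y) \<in> U \<Longrightarrow> fst (c (x, y)) + x * snd (c (x, y)) = 1/2"
    and "\<And>y. y > 0 \<Longrightarrow> ((\<lambda>x. snd (c (x, y))) has_real_derivative 0) (at (1/2))"
    and "\<alpha> > 0"
  shows "((\<lambda>z. theta z (c z) \<alpha>) has_derivative (\<lambda>h. 0)) (at (1/2, sqrt 3 / 2))
       \<and> ((\<lambda>z. theta_hat z (c z) \<alpha>) has_derivative (\<lambda>h. 0)) (at (1/2, sqrt 3 / 2))"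
proof -
  \<comment> \<open>Only differentiability of c at \<rho> and the value c \<rho> = circ_a \<rho> are needed.\<close>
  define \<rho> :: "real \<times> real" where "\<rho> = (1/2, sqrt 3 / 2)"
  have "sqrt 3 / 2 > (0::real)" by simp
  then have c_diff: "c differentiable (at \<rho>)" and c_\<rho>: "(\<rho>, c \<rho>) = hex_point"
    using assms(3-5) by (auto simp: \<rho>_def hex_point_def circ_a_def power_divide)
  have theta: "((\<lambda>p. \<Sum>\<^sub>\<infinity>n. theta_term \<alpha> n p) has_derivative (\<lambda>h. 0)) (at (\<rho>, c \<rho>))"
    unfolding c_\<rho> using theta_sum_differentiable[OF assms(8)]
    by (rule hex_invariant_has_derivative_zero) (simp_all add: theta_sum_reflect theta_sum_rotate)
  have theta_hat: "((\<lambda>p. \<Sum>\<^sub>\<infinity>n. theta_hat_term \<alpha> n p) has_derivative (\<lambda>h. 0)) (at (\<rho>, c \<rho>))"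
    unfolding c_\<rho> using theta_hat_sum_differentiable[OF assms(8)]
    by (rule hex_invariant_has_derivative_zero) (simp_all add: theta_hat_sum_reflect theta_hat_sum_rotate)
  show ?thesis
    using has_derivative_zero_along_graph[OF theta c_diff] has_derivative_zero_along_graph[OF theta_hat c_diff]
    by (simp add: \<rho>_def theta_eq_infsum theta_hat_eq_infsum)
qed

end
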